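(* For every integer $g\geq 3$ there exists a fragile graph that is cubic ($3$-regular) and has girth $g$; in particular, for every $g$ there is a fragile graph of girth $g$ that is not $2$-degenerate.
   Context: All graphs are finite and simple. A graph is $k$-connected if it has at least $k+1$ vertices and no vertex cutset with at most $k-1$ vertices. A graph is fragile if it has no $3$-connected subgraph. A graph is $2$-degenerate if every non-null subgraph has a vertex of degree at most $2$. *)

theory Defs
  imports Main
begin

definition graph :: "'a set \<Rightarrow> 'a set set \<Rightarrow> bool" where
  "graph V E \<longleftrightarrow> finite V \<and> (\<forall>e\<in>E. \<exists>u v. e = {u, v} \<and> u \<noteq> v \<and> u \<in> V \<and> v \<in> V)"

definition subgraph :: "'a set \<Rightarrow> 'a set set \<Rightarrow> 'a set \<Rightarrow> 'a set set \<Rightarrow> bool" where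
  "subgraph V' E' V E \<longleftrightarrow> V' \<subseteq> V \<and> E' \<subseteq> E \<and> graph V' E'"

definition degree :: "'a set set \<Rightarrow> 'a \<Rightarrow> nat" where
  "degree E v = card {e \<in> E. v \<in> e}"

definition adj :: "'a set set \<Rightarrow> 'a \<Rightarrow> 'a \<Rightarrow> bool" where
  "adj E u v \<longleftrightarrow> {u, v} \<in> E"

definition connected :: "'a set \<Rightarrow> 'a set set \<Rightarrow> bool" where
  "connected V E \<longleftrightarrow> V \<noteq> {} \<and>
     (\<forall>u\<in>V. \<forall>v\<in>V. (u, v) \<in> {(x, y). x \<in> V \<and> y \<in> V \<and> adj E x y}\<^sup>*)"

definition del_verts_E :: "'a set set \<Rightarrow> 'a set \<Rightarrow> 'a set set" where
  "del_verts_E E S = {e \<in> E. e \<inter> S = {}}"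

definition vertex_cutset :: "'a set \<Rightarrow> 'a set set \<Rightarrow> 'a set \<Rightarrow> bool" where
  "vertex_cutset V E S \<longleftrightarrow> S \<subseteq> V \<and> \<not> connected (V - S) (del_verts_E E S)"

definition k_connected :: "nat \<Rightarrow> 'a set \<Rightarrow> 'a set set \<Rightarrow> bool" where
  "k_connected k V E \<longleftrightarrow> card V \<ge> k + 1 \<and>
     \<not> (\<exists>S. vertex_cutset V E S \<and> card S \<le> k - 1)"

definition fragile :: "'a set \<Rightarrow> 'a set set \<Rightarrow> bool" where
  "fragile V E \<longleftrightarrow> \<not> (\<exists>V' E'. subgraph V' E' V E \<and> k_connected 3 V' E')"

definition two_degenerate :: "'a set \<Rightarrow> 'a set set \<Rightarrow> bool" where
  "two_degenerate V E \<longleftrightarrow>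
     (\<forall>V' E'. subgraph V' E' V E \<and> V' \<noteq> {} \<longrightarrow> (\<exists>v\<in>V'. degree E' v \<le> 2))"

definition cubic :: "'a set \<Rightarrow> 'a set set \<Rightarrow> bool" where
  "cubic V E \<longleftrightarrow> (\<forall>v\<in>V. degree E v = 3)"

definition has_cycle_of_length :: "'a set \<Rightarrow> 'a set set \<Rightarrow> nat \<Rightarrow> bool" where
  "has_cycle_of_length V E n \<longleftrightarrow> n \<ge> 3 \<and> (\<exists>vs. length vs = n \<and> distinct vs \<and> set vs \<subseteq> V \<and>
      (\<forall>i<n. {vs ! i, vs ! ((i + 1) mod n)} \<in> E))"

definition has_girth :: "'a set \<Rightarrow> 'a set set \<Rightarrow> nat \<Rightarrow> bool" where
  "has_girth V E g \<longleftrightarrow> has_cycle_of_length V E g \<and> (\<forall>n<g. \<not> has_cycle_of_length V E n)"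

end

theory Submission
  imports Defs "HOL-Library.Nat_Bijection" "HOL-Combinatorics.Permutations"
begin

text \<open>
  Cubic graphs of every girth exist: in the Cayley graph of the permutation group generated by the
  actions of the three generators of \<open>\<int>/2 * \<int>/2 * \<int>/2\<close> on reduced words of length at most
  \<open>g\<close>, a cycle of length at most \<open>g\<close> would spell a nonempty reduced word acting trivially.
  Take \<open>g\<close> copies of such a graph, subdivide an edge \<open>xy\<close> of copy \<open>i\<close> by a new vertex, and
  join it to vertex \<open>i\<close> of a \<open>g\<close>-cycle. The result is cubic, and its girth is \<open>g\<close>: the pendant
  edges are bridges, so every other cycle lies in one copy, and a cycle through the subdivision
  vertex shortens to a cycle of the base graph.
  A 3-connected subgraph of a cubic graph has minimum degree three, so it contains all neighbours
  of its vertices. It therefore contains some vertex of the \<open>g\<close>-cycle together with its pendant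
  neighbour, and that vertex is a cut vertex; hence the graph is fragile.
\<close>

section \<open>Cut vertices and fragility of cubic graphs\<close>

definition neighbours :: "'a set set \<Rightarrow> 'a \<Rightarrow> 'a set" where
  "neighbours E v = {u. {v, u} \<in> E}"

definition nbr_closed :: "'a set set \<Rightarrow> 'a set \<Rightarrow> bool" where
  "nbr_closed E W \<longleftrightarrow> (\<forall>u\<in>W. \<forall>w. {u, w} \<in> E \<longrightarrow> w \<in> W)"

text \<open>\<open>c\<close> separates \<open>a\<close> from \<open>b\<close>: every path from \<open>a\<close> to \<open>b\<close> passes through \<open>c\<close>.\<close>

definition separates :: "'a set set \<Rightarrow> 'a \<Rightarrow> 'a \<Rightarrow> 'a \<Rightarrow> bool" where
  "separates E c a b \<longleftrightarrow> (\<exists>Q. a \<in> Q \<and> b \<notin> Q \<and> c \<notin> Q \<and> nbr_closed (del_verts_E E {c}) Q)"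

definition adj_rel :: "'a set \<Rightarrow> 'a set set \<Rightarrow> ('a \<times> 'a) set" where
  "adj_rel V E = {(x, y). x \<in> V \<and> y \<in> V \<and> adj E x y}"

lemma connected_iff: "connected V E \<longleftrightarrow> V \<noteq> {} \<and> (\<forall>u\<in>V. \<forall>v\<in>V. (u, v) \<in> (adj_rel V E)\<^sup>*)"
  by (simp add: connected_def adj_rel_def)

lemma sym_adj_rel: "sym (adj_rel V E)"
  by (auto simp: sym_def adj_rel_def adj_def insert_commute)

lemma graph_edgeE:
  assumes "graph V E" "e \<in> E"
  obtains a b where "e = {a, b}" "a \<noteq> b" "a \<in> V" "b \<in> V"
  using assms unfolding graph_def by blast

lemma graph_edgeD:
  assumes "graph V E" "{a, b} \<in> E"
  shows "a \<in> V" "b \<in> V" "a \<noteq> b"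
  using graph_edgeE[OF assms] by (metis doubleton_eq_iff)+

lemma neighbours_subset:
  assumes "graph V E" shows "neighbours E v \<subseteq> V"
  using graph_edgeD(2)[OF assms] by (auto simp: neighbours_def)

lemma finite_neighbours: "graph V E \<Longrightarrow> finite (neighbours E v)"
  using neighbours_subset by (metis finite_subset graph_def)

lemma degree_eq_card_neighbours:
  assumes G: "graph V E"
  shows "degree E v = card (neighbours E v)"
proof -
  have edges_at: "{e \<in> E. v \<in> e} = (\<lambda>u. {v, u}) ` neighbours E v"
  proof (intro equalityI subsetI)
    fix e assume e: "e \<in> {e \<in> E. v \<in> e}"
    then obtain a b where "e = {a, b}" using graph_edgeE[OF G] by blast
    with e have "e = {v, if a = v then b else a}" by auto
    with e show "e \<in> (\<lambda>u. {v, u}) ` neighbours E v" unfolding neighbours_def by blast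
  qed (auto simp: neighbours_def)
  have "inj_on (\<lambda>u. {v, u}) (neighbours E v)"
  proof (rule inj_onI)
    fix u u' assume "u \<in> neighbours E v" "u' \<in> neighbours E v" and eq: "{v, u} = {v, u'}"
    then have "v \<noteq> u" "v \<noteq> u'" using graph_edgeD(3)[OF G] by (auto simp: neighbours_def)
    with eq show "u = u'" by (auto simp: doubleton_eq_iff)
  qed
  then show ?thesis unfolding degree_def edges_at by (rule card_image)
qed

lemma nbr_closed_mono: "E' \<subseteq> E \<Longrightarrow> nbr_closed E W \<Longrightarrow> nbr_closed E' W"
  by (auto simp: nbr_closed_def)

lemma vertex_cutsetI:
  assumes "S \<subseteq> V" "a \<in> Q" "a \<in> V - S" "b \<in> V - S" "b \<notin> Q"
    and closed: "nbr_closed (del_verts_E E S) Q"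
  shows "vertex_cutset V E S"
proof -
  let ?R = "adj_rel (V - S) (del_verts_E E S)"
  have "?R `` Q \<subseteq> Q" using closed by (auto simp: adj_rel_def adj_def nbr_closed_def)
  then have "?R\<^sup>* `` Q = Q" by (rule Image_closed_trancl)
  then have "(a, b) \<notin> ?R\<^sup>*" using assms by blast
  then show ?thesis using assms unfolding vertex_cutset_def connected_iff by blast
qed

lemma k_connected_min_degree:
  assumes G: "graph V E" and conn: "k_connected k V E" and v: "v \<in> V"
  shows "k \<le> degree E v"
proof (rule ccontr)
  let ?N = "neighbours E v"
  assume "\<not> k \<le> degree E v"
  then have small: "card ?N \<le> k - 1" and k: "k \<ge> 1"
    using degree_eq_card_neighbours[OF G] by auto
  have NV: "?N \<subseteq> V" and vN: "v \<notin> ?N"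
    using neighbours_subset[OF G] graph_edgeD(3)[OF G, of v v] by (auto simp: neighbours_def)
  have "finite V" "card V \<ge> k + 1" using G conn by (simp_all add: graph_def k_connected_def)
  then have "card (V - ?N) \<ge> 2"
    using card_Diff_subset[OF finite_subset[OF NV] NV] small k by linarith
  then have "\<not> V - ?N \<subseteq> {v}"
    using card_mono[of "{v}" "V - ?N"] by auto
  then obtain w where w: "w \<in> V - ?N" "w \<noteq> v" by blast
  have "vertex_cutset V E ?N"
    by (rule vertex_cutsetI[where Q = "{v}" and a = v and b = w])
      (use NV vN v w in \<open>auto simp: nbr_closed_def del_verts_E_def neighbours_def\<close>)
  then show False using conn small unfolding k_connected_def by blast
qed

lemma cubic_k3_subgraph_nbr_closed:
  assumes G: "graph V E" and cub: "cubic V E" and sub: "subgraph V' E' V E"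
    and conn: "k_connected 3 V' E'"
  shows "nbr_closed E V'"
  unfolding nbr_closed_def
proof (intro ballI allI impI)
  fix u w assume u: "u \<in> V'" and uw: "{u, w} \<in> E"
  have G': "graph V' E'" and "V' \<subseteq> V" "E' \<subseteq> E" using sub by (auto simp: subgraph_def)
  then have sub_nbrs: "neighbours E' u \<subseteq> neighbours E u" by (auto simp: neighbours_def)
  have "card (neighbours E u) \<le> card (neighbours E' u)"
    using k_connected_min_degree[OF G' conn u] cub u \<open>V' \<subseteq> V\<close>
    by (simp add: cubic_def degree_eq_card_neighbours[OF G] degree_eq_card_neighbours[OF G'] subset_iff)
  then have "neighbours E' u = neighbours E u"
    using card_seteq[OF finite_neighbours[OF G] sub_nbrs] by blast
  then have "{u, w} \<in> E'" using uw by (auto simp: neighbours_def)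
  then show "w \<in> V'" using graph_edgeD[OF G'] by blast
qed

lemma cubic_fragileI:
  assumes G: "graph V E" and cub: "cubic V E"
    and cut: "\<And>W. W \<subseteq> V \<Longrightarrow> W \<noteq> {} \<Longrightarrow> nbr_closed E W \<Longrightarrow>
      \<exists>c\<in>W. \<exists>a\<in>W. \<exists>b\<in>W. b \<noteq> c \<and> separates E c a b"
  shows "fragile V E"
  unfolding fragile_def
proof
  assume "\<exists>V' E'. subgraph V' E' V E \<and> k_connected 3 V' E'"
  then obtain V' E' where sub: "subgraph V' E' V E" and conn: "k_connected 3 V' E'" by blast
  have "V' \<subseteq> V" "E' \<subseteq> E" using sub by (auto simp: subgraph_def)
  moreover have "V' \<noteq> {}" using conn by (auto simp: k_connected_def)
  ultimately obtain c a b Q where W: "c \<in> V'" "a \<in> V'" "b \<in> V'"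
    and Q: "a \<in> Q" "b \<notin> Q" "c \<notin> Q" "b \<noteq> c" and closed: "nbr_closed (del_verts_E E {c}) Q"
    using cut[OF _ _ cubic_k3_subgraph_nbr_closed[OF G cub sub conn]] unfolding separates_def by metis
  have "del_verts_E E' {c} \<subseteq> del_verts_E E {c}" using \<open>E' \<subseteq> E\<close> by (auto simp: del_verts_E_def)
  then have "vertex_cutset V' E' {c}"
    using W Q nbr_closed_mono[OF _ closed] by (intro vertex_cutsetI[where a = a and b = b]) auto
  moreover have "card {c} \<le> 3 - 1" by simp
  ultimately show False using conn unfolding k_connected_def by blast
qed

lemma cubic_not_two_degenerate:
  assumes "graph V E" "cubic V E" "V \<noteq> {}"
  shows "\<not> two_degenerate V E"
proof
  assume "two_degenerate V E"
  then obtain v where "v \<in> V" "degree E v \<le> 2"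
    using assms unfolding two_degenerate_def subgraph_def by blast
  then show False using assms(2) by (simp add: cubic_def)
qed

section \<open>Cycles\<close>

lemma Suc_mod_less [simp]: "(k::nat) < n \<Longrightarrow> Suc k mod n < n"
  by simp

definition cycle_in :: "'a set \<Rightarrow> 'a set set \<Rightarrow> 'a list \<Rightarrow> bool" where
  "cycle_in V E vs \<longleftrightarrow> 3 \<le> length vs \<and> distinct vs \<and> set vs \<subseteq> V \<and>
     (\<forall>i<length vs. {vs ! i, vs ! ((i + 1) mod length vs)} \<in> E)"

definition girth_at_least :: "'a set \<Rightarrow> 'a set set \<Rightarrow> nat \<Rightarrow> bool" where
  "girth_at_least V E g \<longleftrightarrow> (\<forall>vs. cycle_in V E vs \<longrightarrow> g \<le> length vs)"

lemma girth_at_least_mono: "m \<le> n \<Longrightarrow> girth_at_least V E n \<Longrightarrow> girth_at_least V E m"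
  by (auto simp: girth_at_least_def)

lemma has_cycle_of_length_iff:
  "has_cycle_of_length V E n \<longleftrightarrow> (\<exists>vs. cycle_in V E vs \<and> length vs = n)"
  by (auto simp: has_cycle_of_length_def cycle_in_def)

lemma has_girthI:
  assumes "cycle_in V E vs" "girth_at_least V E (length vs)"
  shows "has_girth V E (length vs)"
  using assms by (auto simp: has_girth_def has_cycle_of_length_iff girth_at_least_def)

lemma cycle_in_length: "cycle_in V E vs \<Longrightarrow> 3 \<le> length vs"
  by (simp add: cycle_in_def)

lemma cycle_in_edge:
  "cycle_in V E vs \<Longrightarrow> i < length vs \<Longrightarrow> {vs ! i, vs ! ((i + 1) mod length vs)} \<in> E"
  by (simp add: cycle_in_def)

lemma cycle_in_no_backtrack:
  assumes cyc: "cycle_in V E vs" and k: "k < length vs"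
  shows "vs ! ((k + 2) mod length vs) \<noteq> vs ! k"
proof -
  have n: "3 \<le> length vs" and "distinct vs" using cyc by (simp_all add: cycle_in_def)
  moreover have "(k + 2) mod length vs \<noteq> k" "(k + 2) mod length vs < length vs"
    using n k by (auto simp: mod_if)
  ultimately show ?thesis using k nth_eq_iff_index_eq by metis
qed

lemma cycle_in_rotate:
  assumes cyc: "cycle_in V E vs"
  shows "cycle_in V E (rotate r vs)"
  unfolding cycle_in_def
proof (intro conjI allI impI)
  let ?n = "length vs"
  show "3 \<le> length (rotate r vs)" "distinct (rotate r vs)" "set (rotate r vs) \<subseteq> V"
    using cyc by (simp_all add: cycle_in_def)
  fix i assume "i < length (rotate r vs)"
  then have i: "i < ?n" by simp
  then have "0 < ?n" by linarith
  have "rotate r vs ! i = vs ! ((r + i) mod ?n)"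
    "rotate r vs ! ((i + 1) mod ?n) = vs ! (((r + i) mod ?n + 1) mod ?n)"
    using i \<open>0 < ?n\<close> by (simp_all add: nth_rotate mod_add_right_eq mod_Suc_eq add.assoc)
  moreover have "(r + i) mod ?n < ?n" using \<open>0 < ?n\<close> by simp
  ultimately show "{rotate r vs ! i, rotate r vs ! ((i + 1) mod length (rotate r vs))} \<in> E"
    using cycle_in_edge[OF cyc] by simp
qed

lemma cycle_in_rotate_last:
  assumes cyc: "cycle_in V E vs" and v: "v \<in> set vs"
  obtains ws where "cycle_in V E ws" "length ws = length vs" "set ws = set vs"
    "ws ! (length ws - 1) = v"
proof -
  obtain k where k: "k < length vs" "vs ! k = v" using v by (auto simp: in_set_conv_nth)
  let ?ws = "rotate (Suc k) vs"
  have "?ws ! (length vs - 1) = vs ! ((Suc k + (length vs - 1)) mod length vs)"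
    using k by (intro nth_rotate) simp
  also have "Suc k + (length vs - 1) = k + length vs" using k by simp
  also have "(k + length vs) mod length vs = k" using k by simp
  finally have "?ws ! (length ?ws - 1) = v" using k by simp
  then show ?thesis using that[OF cycle_in_rotate[OF cyc, of "Suc k"]] by simp
qed

lemma cycle_in_last_edges:
  assumes cyc: "cycle_in V E ws"
  defines "n \<equiv> length ws"
  shows "{ws ! (n - 2), ws ! (n - 1)} \<in> E" "{ws ! (n - 1), ws ! 0} \<in> E" "ws ! 0 \<noteq> ws ! (n - 2)"
proof -
  have n: "3 \<le> n" "distinct ws" using cyc by (simp_all add: cycle_in_def n_def)
  then show "{ws ! (n - 2), ws ! (n - 1)} \<in> E"
    using cycle_in_edge[OF cyc, of "n - 2"] by (simp add: n_def Suc_diff_Suc numeral_2_eq_2)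
  have "Suc (n - 1) = n" using n by simp
  then show "{ws ! (n - 1), ws ! 0} \<in> E" using cycle_in_edge[OF cyc, of "n - 1"] n by (simp add: n_def)
  have "ws \<noteq> []" using n by (auto simp: n_def)
  then show "ws ! 0 \<noteq> ws ! (n - 2)" using n nth_eq_iff_index_eq[of ws 0 "n - 2"] by (simp add: n_def)
qed

lemma cycle_in_two_neighbours:
  assumes cyc: "cycle_in V E vs" and v: "v \<in> set vs"
  obtains a b where "a \<noteq> b" "a \<in> set vs" "b \<in> set vs" "{v, a} \<in> E" "{v, b} \<in> E"
proof -
  obtain ws where ws: "cycle_in V E ws" "length ws = length vs" "set ws = set vs"
    "ws ! (length ws - 1) = v"
    using cycle_in_rotate_last[OF cyc v] .
  have "3 \<le> length ws" using ws(1) by (simp add: cycle_in_def)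
  then have "ws ! 0 \<in> set vs" "ws ! (length ws - 2) \<in> set vs"
    by (auto simp flip: ws(3) intro!: nth_mem)
  then show thesis using that cycle_in_last_edges[OF ws(1)] ws(4) by (metis insert_commute)
qed

lemma cyclic_index_crossing:
  assumes a: "a < length vs" "vs ! a \<in> Q" and b: "b < length vs" "vs ! b \<notin> Q"
  obtains k where "k < length vs" "vs ! k \<in> Q" "vs ! ((k + 1) mod length vs) \<notin> Q"
proof -
  let ?n = "length vs"
  have "\<exists>k<?n. vs ! k \<in> Q \<and> vs ! ((k + 1) mod ?n) \<notin> Q"
  proof (rule ccontr)
    assume "\<not> ?thesis"
    then have step: "vs ! ((k + 1) mod ?n) \<in> Q" if "k < ?n" "vs ! k \<in> Q" for k
      using that by blast
    have all: "vs ! ((a + t) mod ?n) \<in> Q" for t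
    proof (induction t)
      case (Suc t)
      have "(a + t) mod ?n < ?n" using a by (intro mod_less_divisor) linarith
      then show ?case using step[of "(a + t) mod ?n"] Suc by (simp add: mod_Suc_eq)
    qed (use a in simp)
    have "(a + (b + ?n - a)) mod ?n = b" using a b by simp
    then show False using all[of "b + ?n - a"] b by simp
  qed
  then show ?thesis using that by blast
qed

text \<open>A cycle cannot cross a bridge: it would have to use the bridge in both directions.\<close>

lemma cycle_in_bridge_side:
  assumes cyc: "cycle_in V E vs"
    and bridge: "\<And>a b. {a, b} \<in> E \<Longrightarrow> a \<in> Q \<Longrightarrow> b \<notin> Q \<Longrightarrow> a = p \<and> b = q"
  shows "set vs \<subseteq> Q \<or> set vs \<inter> Q = {}"
proof (rule ccontr)
  let ?n = "length vs" and ?s = "\<lambda>k. (k + 1) mod length vs"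
  assume "\<not> (set vs \<subseteq> Q \<or> set vs \<inter> Q = {})"
  then obtain a b where a: "a < ?n" "vs ! a \<in> Q" and b: "b < ?n" "vs ! b \<notin> Q"
    by (auto simp: in_set_conv_nth)
  obtain k where k: "k < ?n" "vs ! k \<in> Q" "vs ! ?s k \<notin> Q"
    using cyclic_index_crossing[OF a b] .
  obtain m where m: "m < ?n" "vs ! m \<in> - Q" "vs ! ?s m \<notin> - Q"
    using cyclic_index_crossing[of b vs "- Q" a] a b by auto
  have "vs ! k = p" "vs ! ?s k = q"
    using bridge[OF cycle_in_edge[OF cyc k(1)] k(2,3)] by auto
  moreover have "vs ! ?s m = p" "vs ! m = q"
    using bridge[of "vs ! ?s m" "vs ! m"] cycle_in_edge[OF cyc m(1)] m(2,3) by (auto simp: insert_commute)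
  moreover have "distinct vs" "?s k < ?n" "?s m < ?n" using cyc k m by (auto simp: cycle_in_def)
  ultimately have "k = ?s m" "?s k = m" using k m by (auto simp: nth_eq_iff_index_eq)
  then have "vs ! ((m + 2) mod ?n) = vs ! m" by (simp add: mod_Suc_eq)
  then show False using cycle_in_no_backtrack[OF cyc m(1)] by simp
qed

lemma cycle_in_map:
  assumes cyc: "cycle_in V E vs" and inj: "inj_on h (set vs)" and into: "h ` set vs \<subseteq> V'"
    and edges: "\<And>a b. {a, b} \<in> E \<Longrightarrow> a \<in> set vs \<Longrightarrow> b \<in> set vs \<Longrightarrow> {h a, h b} \<in> E'"
  shows "cycle_in V' E' (map h vs)"
  unfolding cycle_in_def
proof (intro conjI allI impI)
  show "3 \<le> length (map h vs)" "distinct (map h vs)" "set (map h vs) \<subseteq> V'"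
    using cyc inj into by (simp_all add: cycle_in_def distinct_map)
  fix i assume "i < length (map h vs)"
  then have "i < length vs" "(i + 1) mod length vs < length vs" by auto
  then show "{map h vs ! i, map h vs ! ((i + 1) mod length (map h vs))} \<in> E'"
    using edges[OF cycle_in_edge[OF cyc]] by simp
qed

lemma image_edge_iff:
  assumes G: "graph V E" and inj: "inj_on f V" and ab: "a \<in> V" "b \<in> V"
  shows "{f a, f b} \<in> (`) f ` E \<longleftrightarrow> {a, b} \<in> E"
proof
  assume "{f a, f b} \<in> (`) f ` E"
  then obtain e where e: "e \<in> E" "f ` {a, b} = f ` e" by auto
  moreover have "e \<subseteq> V" using graph_edgeE[OF G e(1)] by blast
  moreover have "{a, b} \<subseteq> V" using ab by simp
  ultimately have "{a, b} = e" using inj_on_image_eq_iff[OF inj] by blast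
  then show "{a, b} \<in> E" using e(1) by simp
next
  assume "{a, b} \<in> E"
  then show "{f a, f b} \<in> (`) f ` E" using imageI[of "{a, b}" E "(`) f"] by simp
qed

lemma graph_image:
  assumes G: "graph V E" and inj: "inj_on f V"
  shows "graph (f ` V) ((`) f ` E)"
  unfolding graph_def
proof (intro conjI ballI)
  show "finite (f ` V)" using G by (simp add: graph_def)
  fix e' assume "e' \<in> (`) f ` E"
  then obtain e where e: "e \<in> E" "e' = f ` e" by blast
  obtain a b where "e = {a, b}" "a \<noteq> b" "a \<in> V" "b \<in> V" using graph_edgeE[OF G e(1)] by blast
  moreover have "f a \<noteq> f b" using calculation inj_on_contraD[OF inj] by blast
  ultimately show "\<exists>u v. e' = {u, v} \<and> u \<noteq> v \<and> u \<in> f ` V \<and> v \<in> f ` V" using e(2) by blast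
qed

lemma neighbours_image:
  assumes G: "graph V E" and inj: "inj_on f V" and v: "v \<in> V"
  shows "neighbours ((`) f ` E) (f v) = f ` neighbours E v"
proof (intro equalityI subsetI)
  fix u' assume "u' \<in> neighbours ((`) f ` E) (f v)"
  then have u': "{f v, u'} \<in> (`) f ` E" by (simp add: neighbours_def)
  then obtain u where "u \<in> V" "u' = f u" using graph_edgeD(2)[OF graph_image[OF G inj]] by blast
  then show "u' \<in> f ` neighbours E v" using u' image_edge_iff[OF G inj v] by (auto simp: neighbours_def)
next
  fix u' assume "u' \<in> f ` neighbours E v"
  then obtain u where "{v, u} \<in> E" "u' = f u" by (auto simp: neighbours_def)
  then show "u' \<in> neighbours ((`) f ` E) (f v)"
    using imageI[of "{v, u}" E "(`) f"] by (simp add: neighbours_def)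
qed

lemma cubic_image:
  assumes G: "graph V E" and cub: "cubic V E" and inj: "inj_on f V"
  shows "cubic (f ` V) ((`) f ` E)"
  unfolding cubic_def
proof
  fix v' assume "v' \<in> f ` V"
  then obtain v where v: "v \<in> V" "v' = f v" by blast
  have "card (f ` neighbours E v) = card (neighbours E v)"
    using card_image[OF inj_on_subset[OF inj neighbours_subset[OF G]]] .
  then show "degree ((`) f ` E) v' = 3"
    using cub v neighbours_image[OF G inj v(1)]
    by (simp add: cubic_def degree_eq_card_neighbours[OF G] degree_eq_card_neighbours[OF graph_image[OF G inj]])
qed

lemma connected_image:
  assumes G: "graph V E" and conn: "connected V E" and inj: "inj_on f V"
  shows "connected (f ` V) ((`) f ` E)"
proof -
  let ?R = "adj_rel V E" and ?R' = "adj_rel (f ` V) ((`) f ` E)"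
  have path: "(f p, f q) \<in> ?R'\<^sup>*" if "(p, q) \<in> ?R\<^sup>*" for p q
    using that
  proof (induction rule: rtrancl_induct)
    case (step b c)
    then have "(f b, f c) \<in> ?R'" using imageI[of "{b, c}" E "(`) f"] by (simp add: adj_rel_def adj_def)
    with step.IH show ?case by (rule rtrancl_into_rtrancl)
  qed simp
  show ?thesis
    unfolding connected_iff
  proof (intro conjI ballI)
    show "f ` V \<noteq> {}" using conn by (simp add: connected_iff)
    fix u' w' assume "u' \<in> f ` V" "w' \<in> f ` V"
    then obtain u w where "u \<in> V" "w \<in> V" "u' = f u" "w' = f w" by blast
    then show "(u', w') \<in> ?R'\<^sup>*" using path conn by (simp add: connected_iff)
  qed
qed

lemma girth_at_least_image:
  assumes G: "graph V E" and girth: "girth_at_least V E g" and inj: "inj_on f V"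
  shows "girth_at_least (f ` V) ((`) f ` E) g"
  unfolding girth_at_least_def
proof (intro allI impI)
  fix vs' assume cyc: "cycle_in (f ` V) ((`) f ` E) vs'"
  then have sub: "set vs' \<subseteq> f ` V" by (simp add: cycle_in_def)
  have "cycle_in V E (map (inv_into V f) vs')"
  proof (rule cycle_in_map[OF cyc])
    show "inj_on (inv_into V f) (set vs')" using inj_on_inv_into[OF sub] .
    show "inv_into V f ` set vs' \<subseteq> V" using sub by (auto intro: inv_into_into)
    fix a' b' assume e': "{a', b'} \<in> (`) f ` E" "a' \<in> set vs'" "b' \<in> set vs'"
    then obtain a b where ab: "a \<in> V" "b \<in> V" "a' = f a" "b' = f b" using sub by blast
    then show "{inv_into V f a', inv_into V f b'} \<in> E"
      using e'(1) image_edge_iff[OF G inj ab(1,2)] inv_into_f_f[OF inj] by simp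
  qed
  then show "g \<le> length vs'" using girth by (auto simp: girth_at_least_def)
qed

section \<open>Cubic graphs of large girth\<close>

lemma successively_nthI:
  "(\<And>i. Suc i < length xs \<Longrightarrow> P (xs ! i) (xs ! Suc i)) \<Longrightarrow> successively P xs"
proof (induction xs)
  case (Cons x ys)
  have "successively P ys"
    using Cons.prems by (intro Cons.IH) (metis Suc_less_eq length_Cons nth_Cons_Suc)
  moreover have "ys \<noteq> [] \<Longrightarrow> P x (hd ys)"
    using Cons.prems[of 0] by (simp add: hd_conv_nth)
  ultimately show ?case by (auto simp: successively_Cons)
qed simp

definition reduced_words :: "nat \<Rightarrow> nat list set" where
  "reduced_words N = {ws. set ws \<subseteq> {..<3} \<and> successively (\<noteq>) ws \<and> length ws \<le> N}"

text \<open>Multiplication by the generator \<open>s\<close> of \<open>\<int>/2 * \<int>/2 * \<int>/2\<close> on reduced words, truncated at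
  length \<open>N\<close>: a permutation of a finite set that acts like the free product on words shorter
  than \<open>N\<close>.\<close>

definition toggle :: "nat \<Rightarrow> nat \<Rightarrow> nat list \<Rightarrow> nat list" where
  "toggle N s ws = (if ws \<notin> reduced_words N then ws
     else if ws \<noteq> [] \<and> hd ws = s then tl ws
     else if length ws < N then s # ws else ws)"

lemma reduced_words_ConsD:
  "s # ws \<in> reduced_words N \<Longrightarrow> ws \<in> reduced_words N \<and> (ws \<noteq> [] \<longrightarrow> hd ws \<noteq> s) \<and> length ws < N"
  by (auto simp: reduced_words_def successively_Cons)

lemma reduced_words_ConsI:
  "ws \<in> reduced_words N \<Longrightarrow> s < 3 \<Longrightarrow> (ws \<noteq> [] \<longrightarrow> hd ws \<noteq> s) \<Longrightarrow> length ws < N \<Longrightarrow>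
    s # ws \<in> reduced_words N"
  by (auto simp: reduced_words_def successively_Cons)

lemma toggle_toggle:
  assumes s: "s < 3"
  shows "toggle N s (toggle N s ws) = ws"
proof (cases "ws \<in> reduced_words N \<and> ws \<noteq> [] \<and> hd ws = s")
  case True
  then obtain us where "ws = s # us" by (cases ws) auto
  with True show ?thesis by (auto simp: toggle_def dest: reduced_words_ConsD)
next
  case False
  then show ?thesis using s by (auto simp: toggle_def intro: reduced_words_ConsI)
qed

lemma toggle_Nil: "1 \<le> N \<Longrightarrow> s < 3 \<Longrightarrow> toggle N s [] = [s]"
  by (simp add: toggle_def reduced_words_def)

lemma toggle_permutes: "s < 3 \<Longrightarrow> toggle N s permutes reduced_words N"
  unfolding permutes_def by (metis toggle_toggle toggle_def)

inductive_set toggle_group :: "nat \<Rightarrow> (nat list \<Rightarrow> nat list) set" for N where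
  toggle_group_id: "id \<in> toggle_group N"
| toggle_group_step: "h \<in> toggle_group N \<Longrightarrow> s < 3 \<Longrightarrow> h \<circ> toggle N s \<in> toggle_group N"

lemma toggle_group_permutes: "h \<in> toggle_group N \<Longrightarrow> h permutes reduced_words N"
proof (induction rule: toggle_group.induct)
  case (toggle_group_step h s)
  then show ?case using permutes_compose[OF toggle_permutes] by blast
qed (rule permutes_id)

lemma finite_toggle_group: "finite (toggle_group N)"
proof (rule finite_subset)
  show "toggle_group N \<subseteq> {p. p permutes reduced_words N}" using toggle_group_permutes by blast
  have "reduced_words N \<subseteq> {ws. set ws \<subseteq> {..<3} \<and> length ws \<le> N}" by (auto simp: reduced_words_def)
  then show "finite {p. p permutes reduced_words N}"
    by (intro finite_permutations finite_subset[OF _ finite_lists_length_le]) auto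
qed

definition toggle_word :: "nat \<Rightarrow> nat list \<Rightarrow> nat list \<Rightarrow> nat list" where
  "toggle_word N ws = foldr (\<lambda>s f. toggle N s \<circ> f) ws id"

lemma toggle_word_snoc: "toggle_word N (ws @ [s]) = toggle_word N ws \<circ> toggle N s"
  by (induction ws) (auto simp: toggle_word_def)

lemma toggle_word_Nil: "ws \<in> reduced_words N \<Longrightarrow> toggle_word N ws [] = ws"
proof (induction ws)
  case (Cons s ws)
  then show ?case by (auto simp: toggle_word_def toggle_def dest: reduced_words_ConsD)
qed (simp add: toggle_word_def)

definition cayley_edges :: "nat \<Rightarrow> (nat list \<Rightarrow> nat list) set set" where
  "cayley_edges N = {{h, h \<circ> toggle N s} | h s. h \<in> toggle_group N \<and> s < 3}"

lemma cayley_edgeI: "h \<in> toggle_group N \<Longrightarrow> s < 3 \<Longrightarrow> {h, h \<circ> toggle N s} \<in> cayley_edges N"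
  by (auto simp: cayley_edges_def)

lemma toggle_comp_toggle: "s < 3 \<Longrightarrow> toggle N s \<circ> toggle N s = id"
  by (rule ext) (simp add: toggle_toggle)

lemma cayley_edgeD:
  assumes "{u, w} \<in> cayley_edges N"
  shows "u \<in> toggle_group N \<and> (\<exists>s<3. w = u \<circ> toggle N s)"
proof -
  obtain h s where e: "{u, w} = {h, h \<circ> toggle N s}" and h: "h \<in> toggle_group N" and s: "s < 3"
    using assms by (auto simp: cayley_edges_def)
  then consider "u = h" "w = h \<circ> toggle N s" | "u = h \<circ> toggle N s" "w = h"
    by (auto simp: doubleton_eq_iff)
  then show ?thesis
  proof cases
    case 2
    then have "w = u \<circ> toggle N s" by (simp add: comp_assoc toggle_comp_toggle[OF s])
    then show ?thesis using 2(1) toggle_group_step[OF h s] s by metis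
  qed (use h s in blast)
qed

lemma toggle_group_step_neq:
  assumes "h \<in> toggle_group N" "s < 3" "1 \<le> N"
  shows "h \<circ> toggle N s \<noteq> h"
proof
  assume "h \<circ> toggle N s = h"
  then have "h [s] = h []" using toggle_Nil[OF assms(3,2)] by (metis comp_apply)
  then show False using permutes_inj[OF toggle_group_permutes[OF assms(1)]] by (simp add: inj_eq)
qed

lemma graph_cayley: "1 \<le> N \<Longrightarrow> graph (toggle_group N) (cayley_edges N)"
  unfolding graph_def cayley_edges_def
  using finite_toggle_group toggle_group_step toggle_group_step_neq by blast

lemma neighbours_cayley:
  "h \<in> toggle_group N \<Longrightarrow> neighbours (cayley_edges N) h = (\<lambda>s. h \<circ> toggle N s) ` {..<3}"
  unfolding neighbours_def using cayley_edgeD cayley_edgeI by blast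

lemma cubic_cayley:
  assumes N: "1 \<le> N"
  shows "cubic (toggle_group N) (cayley_edges N)"
  unfolding cubic_def
proof
  fix h assume h: "h \<in> toggle_group N"
  have "inj_on (\<lambda>s. h \<circ> toggle N s) {..<3}"
  proof (rule inj_onI)
    fix s t assume "s \<in> {..<3}" "t \<in> {..<3}" "h \<circ> toggle N s = h \<circ> toggle N t"
    then have "h [s] = h [t]" using toggle_Nil[OF N] by (metis comp_apply lessThan_iff)
    then show "s = t" using permutes_inj[OF toggle_group_permutes[OF h]] by (simp add: inj_eq)
  qed
  then show "degree (cayley_edges N) h = 3"
    using degree_eq_card_neighbours[OF graph_cayley[OF N]] neighbours_cayley[OF h] by (simp add: card_image)
qed

lemma connected_cayley: "connected (toggle_group N) (cayley_edges N)"
proof -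
  let ?R = "adj_rel (toggle_group N) (cayley_edges N)"
  have to_id: "(h, id) \<in> ?R\<^sup>*" if "h \<in> toggle_group N" for h
    using that
  proof (induction rule: toggle_group.induct)
    case (toggle_group_step h s)
    have "{h \<circ> toggle N s, h} \<in> cayley_edges N"
      using cayley_edgeI[OF toggle_group_step.hyps] by (simp add: insert_commute)
    moreover have "h \<circ> toggle N s \<in> toggle_group N"
      using toggle_group_step.hyps by (rule toggle_group.toggle_group_step)
    ultimately have "(h \<circ> toggle N s, h) \<in> ?R"
      using toggle_group_step.hyps(1) by (simp add: adj_rel_def adj_def)
    then show ?case using toggle_group_step.IH by (rule converse_rtrancl_into_rtrancl)
  qed simp
  have from_id: "(id, h) \<in> ?R\<^sup>*" if "h \<in> toggle_group N" for h
    using sym_rtrancl[OF sym_adj_rel] to_id[OF that] by (rule symD)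
  show ?thesis
    unfolding connected_iff
  proof (intro conjI ballI)
    show "toggle_group N \<noteq> {}" using toggle_group.toggle_group_id by blast
    fix u w assume "u \<in> toggle_group N" "w \<in> toggle_group N"
    then show "(u, w) \<in> ?R\<^sup>*" using to_id from_id by (meson rtrancl_trans)
  qed
qed

lemma cayley_cycle_word:
  assumes cyc: "cycle_in (toggle_group N) (cayley_edges N) vs"
  obtains ss where "length ss = length vs" "set ss \<subseteq> {..<3}" "successively (\<noteq>) ss"
    "\<And>j. j < length vs \<Longrightarrow> vs ! ((j + 1) mod length vs) = vs ! j \<circ> toggle N (ss ! j)"
proof -
  let ?n = "length vs"
  have "\<forall>j<?n. \<exists>s<3. vs ! ((j + 1) mod ?n) = vs ! j \<circ> toggle N s"
    using cayley_edgeD[OF cycle_in_edge[OF cyc]] by blast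
  then obtain f where f: "\<And>j. j < ?n \<Longrightarrow> f j < 3 \<and> vs ! ((j + 1) mod ?n) = vs ! j \<circ> toggle N (f j)"
    by metis
  let ?ss = "map f [0..<?n]"
  have "successively (\<noteq>) ?ss"
  proof (rule successively_nthI)
    fix j assume j: "Suc j < length ?ss"
    show "?ss ! j \<noteq> ?ss ! Suc j"
    proof
      assume "?ss ! j = ?ss ! Suc j"
      then have "vs ! ((j + 2) mod ?n) = vs ! j \<circ> toggle N (f j) \<circ> toggle N (f j)"
        using f[of j] f[of "Suc j"] j by simp
      also have "\<dots> = vs ! j" using f[of j] j by (simp add: comp_assoc toggle_comp_toggle)
      finally show False using cycle_in_no_backtrack[OF cyc, of j] j by simp
    qed
  qed
  then show thesis using f by (intro that[of ?ss]) auto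
qed

lemma cayley_cycle_telescope:
  assumes step: "\<And>j. j < length vs \<Longrightarrow> vs ! ((j + 1) mod length vs) = vs ! j \<circ> toggle N (ss ! j)"
    and len: "length ss = length vs" and j: "j \<le> length vs"
  shows "vs ! 0 \<circ> toggle_word N (take j ss) = vs ! (j mod length vs)"
  using j
proof (induction j)
  case (Suc j)
  then have IH: "vs ! 0 \<circ> toggle_word N (take j ss) = vs ! j" by (simp add: o_def)
  have take: "take (Suc j) ss = take j ss @ [ss ! j]" using Suc len by (simp add: take_Suc_conv_app_nth)
  have "vs ! 0 \<circ> toggle_word N (take (Suc j) ss) = (vs ! 0 \<circ> toggle_word N (take j ss)) \<circ> toggle N (ss ! j)"
    unfolding take toggle_word_snoc by (simp only: comp_assoc)
  also have "\<dots> = vs ! j \<circ> toggle N (ss ! j)" by (simp only: IH)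
  finally show ?case using Suc step[of j] by simp
qed (simp add: toggle_word_def)

text \<open>The labels of a short cycle form a nonempty reduced word whose action fixes the empty
  word, but on words of length at most \<open>N\<close> the action is free.\<close>

lemma girth_cayley: "girth_at_least (toggle_group N) (cayley_edges N) (Suc N)"
  unfolding girth_at_least_def
proof (intro allI impI)
  fix vs assume cyc: "cycle_in (toggle_group N) (cayley_edges N) vs"
  obtain ss where ss: "length ss = length vs" "set ss \<subseteq> {..<3}" "successively (\<noteq>) ss"
    and step: "\<And>j. j < length vs \<Longrightarrow> vs ! ((j + 1) mod length vs) = vs ! j \<circ> toggle N (ss ! j)"
    using cayley_cycle_word[OF cyc] by blast
  have "vs ! 0 \<in> set vs" using cycle_in_length[OF cyc] by (intro nth_mem) linarith
  then have v0: "vs ! 0 \<in> toggle_group N" using cyc by (auto simp: cycle_in_def)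
  have "vs ! 0 \<circ> toggle_word N ss = vs ! 0"
    using cayley_cycle_telescope[OF step ss(1), of "length vs"] ss(1) by simp
  then have "(vs ! 0) (toggle_word N ss []) = (vs ! 0) []" by (metis comp_apply)
  then have "toggle_word N ss [] = []"
    using permutes_inj[OF toggle_group_permutes[OF v0]] by (simp add: inj_eq)
  moreover have "ss \<noteq> []" using ss(1) cyc by (auto simp: cycle_in_def)
  ultimately have "ss \<notin> reduced_words N" using toggle_word_Nil by metis
  then show "Suc N \<le> length vs" using ss by (auto simp: reduced_words_def)
qed

lemma cubic_graph_large_girth_nat:
  obtains V :: "nat set" and E x y
  where "graph V E" "cubic V E" "connected V E" "girth_at_least V E g" "{x, y} \<in> E"
proof -
  let ?N = "Suc g"
  obtain f :: "(nat list \<Rightarrow> nat list) \<Rightarrow> nat" where inj: "inj_on f (toggle_group ?N)"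
    using finite_imp_inj_to_nat_seg[OF finite_toggle_group] by blast
  have G: "graph (toggle_group ?N) (cayley_edges ?N)" by (rule graph_cayley) simp
  have "{id, id \<circ> toggle ?N 0} \<in> cayley_edges ?N"
    by (rule cayley_edgeI) (simp_all add: toggle_group_id)
  then have edge: "f ` {id, id \<circ> toggle ?N 0} \<in> (`) f ` cayley_edges ?N" by (rule imageI)
  have "girth_at_least (toggle_group ?N) (cayley_edges ?N) g"
    by (rule girth_at_least_mono[OF _ girth_cayley]) simp
  from that[OF graph_image[OF G inj] cubic_image[OF G cubic_cayley inj]
      connected_image[OF G connected_cayley inj] girth_at_least_image[OF G this inj]]
  show thesis using edge by simp
qed

definition rim :: "nat \<Rightarrow> nat" where "rim i = prod_encode (0, i)"
definition link :: "nat \<Rightarrow> nat" where "link i = prod_encode (1, i)"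
definition copy :: "nat \<Rightarrow> nat \<Rightarrow> nat" where "copy i h = prod_encode (2, prod_encode (i, h))"
definition uncopy :: "nat \<Rightarrow> nat" where "uncopy v = snd (prod_decode (snd (prod_decode v)))"

lemma vertex_encoding_simps [simp]:
  "rim i = rim j \<longleftrightarrow> i = j" "link i = link j \<longleftrightarrow> i = j" "copy i a = copy j b \<longleftrightarrow> i = j \<and> a = b"
  "rim i \<noteq> link j" "link j \<noteq> rim i" "rim i \<noteq> copy j a" "copy j a \<noteq> rim i"
  "link i \<noteq> copy j a" "copy j a \<noteq> link i" "uncopy (copy i h) = h"
  by (auto simp: rim_def link_def copy_def uncopy_def)

locale fragile_construction =
  fixes g :: nat and V :: "nat set" and E :: "nat set set" and x y :: nat
  assumes g3: "3 \<le> g" and base_graph: "graph V E" and base_cubic: "cubic V E"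
    and base_connected: "connected V E" and base_girth: "girth_at_least V E g"
    and base_edge: "{x, y} \<in> E"
begin

lemma xy_in: "x \<in> V" "y \<in> V" "x \<noteq> y"
  using graph_edgeD[OF base_graph base_edge] by auto

definition nxt :: "nat \<Rightarrow> nat" where "nxt i = (if Suc i = g then 0 else Suc i)"
definition prv :: "nat \<Rightarrow> nat" where "prv i = (if i = 0 then g - 1 else i - 1)"

lemma nxt_lt: "i < g \<Longrightarrow> nxt i < g" using g3 by (auto simp: nxt_def)
lemma prv_lt: "i < g \<Longrightarrow> prv i < g" using g3 by (auto simp: prv_def)
lemma nxt_ne: "i < g \<Longrightarrow> nxt i \<noteq> i" using g3 by (auto simp: nxt_def)
lemma prv_ne_nxt: "i < g \<Longrightarrow> prv i \<noteq> nxt i" using g3 by (auto simp: nxt_def prv_def)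
lemma nxt_prv: "i < g \<Longrightarrow> nxt (prv i) = i" using g3 by (auto simp: nxt_def prv_def)
lemma prv_nxt: "i < g \<Longrightarrow> prv (nxt i) = i" using g3 by (auto simp: nxt_def prv_def)
lemma nxt_mod: "i < g \<Longrightarrow> nxt i = (i + 1) mod g" using g3 by (auto simp: nxt_def)

text \<open>Copy \<open>i\<close> of the base graph has its edge \<open>{x, y}\<close> subdivided by \<open>link i\<close>, which hangs
  off vertex \<open>rim i\<close> of a \<open>g\<close>-cycle.\<close>

definition arc :: "nat \<Rightarrow> nat \<Rightarrow> bool" where
  "arc u w \<longleftrightarrow> (\<exists>i<g. u = rim i \<and> w = rim (nxt i)) \<or> (\<exists>i<g. u = rim i \<and> w = link i)
     \<or> (\<exists>i<g. u = link i \<and> (w = copy i x \<or> w = copy i y))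
     \<or> (\<exists>i<g. \<exists>a b. u = copy i a \<and> w = copy i b \<and> {a, b} \<in> E \<and> {a, b} \<noteq> {x, y})"

definition gadget :: "nat \<Rightarrow> nat set" where "gadget i = insert (link i) (copy i ` V)"

definition verts :: "nat set" where "verts = rim ` {..<g} \<union> (\<Union>i<g. gadget i)"

definition edges :: "nat set set" where "edges = {{u, w} | u w. arc u w}"

lemma edges_iff: "{p, q} \<in> edges \<longleftrightarrow> arc p q \<or> arc q p"
  unfolding edges_def by (auto simp: doubleton_eq_iff)

lemma neighbours_edges: "neighbours edges v = {u. arc v u \<or> arc u v}"
  by (simp add: neighbours_def edges_iff)

lemma rim_in_verts: "rim i \<in> verts \<longleftrightarrow> i < g"
  and link_in_verts: "link i \<in> verts \<longleftrightarrow> i < g"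
  and copy_in_verts: "copy i h \<in> verts \<longleftrightarrow> i < g \<and> h \<in> V"
  by (auto simp: verts_def gadget_def)

lemma verts_cases:
  assumes "v \<in> verts"
  obtains (rim) i where "i < g" "v = rim i" | (gadget) i where "i < g" "v \<in> gadget i"
  using assms unfolding verts_def by blast

lemma gadget_cases:
  assumes "v \<in> gadget i"
  obtains (link) "v = link i" | (copy) h where "h \<in> V" "v = copy i h"
  using assms unfolding gadget_def by blast

lemma arc_rim_left: "i < g \<Longrightarrow> arc (rim i) u \<longleftrightarrow> u = rim (nxt i) \<or> u = link i"
  unfolding arc_def by simp

lemma arc_rim_right:
  assumes i: "i < g"
  shows "arc u (rim i) \<longleftrightarrow> u = rim (prv i)"
proof
  assume "arc u (rim i)"
  then obtain j where "j < g" "u = rim j" "i = nxt j" unfolding arc_def by auto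
  then show "u = rim (prv i)" using prv_nxt by simp
next
  assume "u = rim (prv i)"
  then show "arc u (rim i)" unfolding arc_def using prv_lt[OF i] nxt_prv[OF i] by auto
qed

lemma arc_link_left: "i < g \<Longrightarrow> arc (link i) u \<longleftrightarrow> u = copy i x \<or> u = copy i y"
  unfolding arc_def by simp

lemma arc_link_right: "i < g \<Longrightarrow> arc u (link i) \<longleftrightarrow> u = rim i"
  unfolding arc_def by auto

lemma arc_copy_left:
  "arc (copy i h) u \<longleftrightarrow> i < g \<and> (\<exists>b. u = copy i b \<and> {h, b} \<in> E \<and> {h, b} \<noteq> {x, y})"
  unfolding arc_def by auto

lemma arc_copy_right:
  "arc u (copy i h) \<longleftrightarrow> i < g \<and> ((u = link i \<and> (h = x \<or> h = y)) \<or>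
     (\<exists>a. u = copy i a \<and> {a, h} \<in> E \<and> {a, h} \<noteq> {x, y}))"
  unfolding arc_def by auto

lemma neighbours_rim: "i < g \<Longrightarrow> neighbours edges (rim i) = {rim (nxt i), rim (prv i), link i}"
  unfolding neighbours_edges by (auto simp: arc_rim_left arc_rim_right)

lemma neighbours_link: "i < g \<Longrightarrow> neighbours edges (link i) = {rim i, copy i x, copy i y}"
  unfolding neighbours_edges by (auto simp: arc_link_left arc_link_right)

lemma neighbours_copy:
  "i < g \<Longrightarrow> neighbours edges (copy i h) =
     copy i ` {a. {h, a} \<in> E \<and> {h, a} \<noteq> {x, y}} \<union> (if h = x \<or> h = y then {link i} else {})"
  unfolding neighbours_edges arc_copy_left arc_copy_right by (auto simp: insert_commute)

lemma copy_edgeD: "{copy i a, copy i b} \<in> edges \<Longrightarrow> {a, b} \<in> E \<and> {a, b} \<noteq> {x, y}"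
  by (auto simp: edges_iff arc_copy_left insert_commute)

lemma arc_verts: "arc u w \<Longrightarrow> u \<in> verts \<and> w \<in> verts \<and> u \<noteq> w"
  unfolding arc_def
  using nxt_lt nxt_ne[THEN not_sym] xy_in graph_edgeD[OF base_graph]
  by (auto simp: rim_in_verts link_in_verts copy_in_verts)

lemma graph_verts_edges: "graph verts edges"
  unfolding graph_def
proof (intro conjI ballI)
  show "finite verts" using base_graph by (simp add: verts_def gadget_def graph_def)
  fix e assume "e \<in> edges"
  then obtain u w where "e = {u, w}" "arc u w" unfolding edges_def by blast
  then show "\<exists>u v. e = {u, v} \<and> u \<noteq> v \<and> u \<in> verts \<and> v \<in> verts" using arc_verts by blast
qed

lemma card_neighbours_copy:
  assumes i: "i < g" and h: "h \<in> V"
  shows "card (neighbours edges (copy i h)) = 3"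
proof -
  let ?A = "{a. {h, a} \<in> E \<and> {h, a} \<noteq> {x, y}}"
  have card_nbrs: "card (neighbours E h) = 3"
    using base_cubic h by (simp add: cubic_def degree_eq_card_neighbours[OF base_graph])
  have inj: "inj_on (copy i) ?A" by (rule inj_onI) simp
  show ?thesis
  proof (cases "h = x \<or> h = y")
    case True
    define other where "other = (if h = x then y else x)"
    have A: "?A = neighbours E h - {other}"
      using True xy_in by (auto simp: neighbours_def other_def doubleton_eq_iff)
    have "other \<in> neighbours E h" using True base_edge by (auto simp: neighbours_def other_def insert_commute)
    then have "card ?A = 2" "finite ?A" using A card_nbrs finite_neighbours[OF base_graph] by simp_all
    moreover have "link i \<notin> copy i ` ?A" by auto
    ultimately show ?thesis using True neighbours_copy[OF i] card_image[OF inj] by simp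
  next
    case False
    then have "?A = neighbours E h" by (auto simp: neighbours_def doubleton_eq_iff)
    then show ?thesis using False neighbours_copy[OF i] card_image[OF inj] card_nbrs by simp
  qed
qed

lemma cubic_verts_edges: "cubic verts edges"
  unfolding cubic_def
proof
  fix v assume "v \<in> verts"
  then have "card (neighbours edges v) = 3"
  proof (cases rule: verts_cases)
    case (rim i)
    then show ?thesis using prv_ne_nxt[OF rim(1)] by (simp add: neighbours_rim)
  next
    case (gadget i)
    from gadget(2) show ?thesis
      by (cases rule: gadget_cases) (use gadget(1) xy_in in \<open>simp_all add: neighbours_link card_neighbours_copy\<close>)
  qed
  then show "degree edges v = 3" by (simp add: degree_eq_card_neighbours[OF graph_verts_edges])
qed

lemma neighbours_copy_subset:
  assumes i: "i < g"
  shows "neighbours edges (copy i h) \<subseteq> gadget i"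
proof -
  have "{a. {h, a} \<in> E \<and> {h, a} \<noteq> {x, y}} \<subseteq> V"
    using neighbours_subset[OF base_graph, of h] by (auto simp: neighbours_def)
  then show ?thesis unfolding neighbours_copy[OF i] gadget_def by auto
qed

lemma gadget_bridge:
  assumes e: "{a, b} \<in> edges" and i: "i < g" and a: "a \<in> gadget i" and b: "b \<notin> gadget i"
  shows "a = link i \<and> b = rim i"
proof -
  have nb: "b \<in> neighbours edges a" using e by (simp add: neighbours_def)
  from a show ?thesis
  proof (cases rule: gadget_cases)
    case link
    then show ?thesis using nb b xy_in by (auto simp: neighbours_link[OF i] gadget_def)
  next
    case (copy h)
    then show ?thesis using nb b neighbours_copy_subset[OF i] by blast
  qed
qed

lemma nbr_closed_arc: "nbr_closed edges W \<Longrightarrow> u \<in> W \<Longrightarrow> arc u w \<or> arc w u \<Longrightarrow> w \<in> W"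
  unfolding nbr_closed_def edges_iff[symmetric] by blast

lemma nbr_closed_copy_link:
  assumes W: "nbr_closed edges W" and i: "i < g" and h: "h \<in> V" and hW: "copy i h \<in> W"
  shows "link i \<in> W"
proof -
  have "(h, x) \<in> (adj_rel V E)\<^sup>*" using base_connected h xy_in by (simp add: connected_iff)
  then have "copy i h \<in> W \<longrightarrow> link i \<in> W"
  proof (induction rule: converse_rtrancl_induct)
    case base
    show ?case using nbr_closed_arc[OF W, of "copy i x" "link i"] arc_link_left[OF i] by blast
  next
    case (step h h')
    then have hh': "{h, h'} \<in> E" by (simp add: adj_rel_def adj_def)
    show ?case
    proof
      assume hW: "copy i h \<in> W"
      show "link i \<in> W"
      proof (cases "{h, h'} = {x, y}")
        case True
        then have "h = x \<or> h = y" by (auto simp: doubleton_eq_iff)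
        then show ?thesis using nbr_closed_arc[OF W hW, of "link i"] arc_link_left[OF i] by blast
      next
        case False
        then have "arc (copy i h) (copy i h')" using i hh' by (auto simp: arc_copy_left)
        then show ?thesis using nbr_closed_arc[OF W hW] step.IH by blast
      qed
    qed
  qed
  then show ?thesis using hW by blast
qed

lemma nbr_closed_contains_rim:
  assumes sub: "W \<subseteq> verts" and ne: "W \<noteq> {}" and W: "nbr_closed edges W"
  obtains i where "i < g" "rim i \<in> W"
proof -
  obtain v where v: "v \<in> W" using ne by blast
  with sub have "v \<in> verts" by blast
  then show thesis
  proof (cases rule: verts_cases)
    case (gadget i)
    have "link i \<in> W"
      using gadget(2) by (cases rule: gadget_cases) (use v nbr_closed_copy_link[OF W gadget(1)] in simp_all)
    then have "rim i \<in> W" using nbr_closed_arc[OF W] arc_rim_left[OF gadget(1)] by blast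
    then show thesis using that gadget(1) by blast
  qed (use that v in blast)
qed

lemma gadget_nbr_closed: "i < g \<Longrightarrow> nbr_closed (del_verts_E edges {rim i}) (gadget i)"
  unfolding nbr_closed_def del_verts_E_def using gadget_bridge by blast

lemma fragile_verts_edges: "fragile verts edges"
proof (rule cubic_fragileI[OF graph_verts_edges cubic_verts_edges])
  fix W assume "W \<subseteq> verts" "W \<noteq> {}" and W: "nbr_closed edges W"
  then obtain i where i: "i < g" "rim i \<in> W" by (rule nbr_closed_contains_rim)
  then have "link i \<in> W" "rim (nxt i) \<in> W" using nbr_closed_arc[OF W] arc_rim_left[OF i(1)] by blast+
  moreover have "link i \<in> gadget i" "rim (nxt i) \<notin> gadget i" "rim i \<notin> gadget i" "rim (nxt i) \<noteq> rim i"
    using nxt_ne[OF i(1)] by (auto simp: gadget_def)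
  ultimately have "separates edges (rim i) (link i) (rim (nxt i))"
    unfolding separates_def using gadget_nbr_closed[OF i(1)] by blast
  then show "\<exists>c\<in>W. \<exists>a\<in>W. \<exists>b\<in>W. b \<noteq> c \<and> separates edges c a b"
    using i(2) \<open>link i \<in> W\<close> \<open>rim (nxt i) \<in> W\<close> \<open>rim (nxt i) \<noteq> rim i\<close> by blast
qed

lemma nxt_closed_eq_all:
  assumes T: "T \<subseteq> {..<g}" "j0 \<in> T" and closed: "\<And>j. j \<in> T \<Longrightarrow> nxt j \<in> T"
  shows "T = {..<g}"
proof -
  have j0: "j0 < g" using T by auto
  have reach: "(j0 + t) mod g \<in> T" for t
  proof (induction t)
    case (Suc t)
    have "nxt ((j0 + t) mod g) = (j0 + Suc t) mod g" using g3 by (simp add: nxt_mod mod_Suc_eq)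
    then show ?case using closed[OF Suc.IH] by simp
  qed (use T j0 in simp)
  have "j \<in> T" if "j < g" for j
    using reach[of "j + g - j0"] that j0 by simp
  then show ?thesis using T by blast
qed

lemma rim_cycle_nxt_closed:
  assumes cyc: "cycle_in verts edges vs" and rims: "set vs \<subseteq> rim ` {..<g}" and j: "rim j \<in> set vs"
  shows "rim (nxt j) \<in> set vs"
proof -
  have jg: "j < g" using rims j by auto
  obtain a b where ab: "a \<noteq> b" "a \<in> set vs" "b \<in> set vs" "{rim j, a} \<in> edges" "{rim j, b} \<in> edges"
    using cycle_in_two_neighbours[OF cyc j] .
  then have "a \<in> {rim (nxt j), rim (prv j), link j}" "b \<in> {rim (nxt j), rim (prv j), link j}"
    using neighbours_rim[OF jg] by (auto simp: neighbours_def)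
  moreover have "a \<noteq> link j" "b \<noteq> link j" using ab(2,3) rims by auto
  ultimately show ?thesis using ab(1-3) by auto
qed

lemma rim_cycle_length:
  assumes cyc: "cycle_in verts edges vs" and rims: "set vs \<subseteq> rim ` {..<g}"
  shows "g \<le> length vs"
proof -
  obtain v where "v \<in> set vs" using cycle_in_length[OF cyc] by (cases vs) auto
  then obtain j0 where j0: "rim j0 \<in> set vs" using rims by auto
  have "{j. rim j \<in> set vs} = {..<g}"
  proof (rule nxt_closed_eq_all)
    show "{j. rim j \<in> set vs} \<subseteq> {..<g}" using rims by auto
  qed (use j0 rim_cycle_nxt_closed[OF cyc rims] in simp_all)
  then have "rim ` {..<g} \<subseteq> set vs" by auto
  then have "card (rim ` {..<g}) \<le> card (set vs)" by (rule card_mono[rotated]) simp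
  moreover have "card (rim ` {..<g}) = g" by (simp add: card_image inj_on_def)
  moreover have "card (set vs) = length vs" using cyc by (simp add: cycle_in_def distinct_card)
  ultimately show ?thesis by simp
qed

lemma copy_cycle_length:
  assumes cyc: "cycle_in verts edges vs" and copies: "set vs \<subseteq> copy i ` V"
  shows "g \<le> length vs"
proof -
  have "cycle_in V E (map uncopy vs)"
  proof (rule cycle_in_map[OF cyc])
    show "inj_on uncopy (set vs)" by (rule inj_on_subset[OF _ copies]) (auto simp: inj_on_def)
    show "uncopy ` set vs \<subseteq> V" using copies by auto
    fix a b assume "{a, b} \<in> edges" "a \<in> set vs" "b \<in> set vs"
    moreover obtain a' b' where "a = copy i a'" "b = copy i b'" using calculation(2,3) copies by blast
    ultimately show "{uncopy a, uncopy b} \<in> E" using copy_edgeD by simp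
  qed
  then show ?thesis using base_girth by (auto simp: girth_at_least_def)
qed

lemma link_cycle_ends:
  assumes ws: "cycle_in verts edges ws" "set ws \<subseteq> gadget i" "ws ! (length ws - 1) = link i" and i: "i < g"
  shows "\<And>k. k < length ws - 1 \<Longrightarrow> ws ! k \<in> copy i ` V"
    and "{ws ! 0, ws ! (length ws - 2)} = {copy i x, copy i y}"
proof -
  let ?n = "length ws"
  have n: "3 \<le> ?n" "distinct ws" using ws(1) by (simp_all add: cycle_in_def)
  note last = ws(3)
  show copies: "ws ! k \<in> copy i ` V" if k: "k < ?n - 1" for k
  proof -
    have "ws ! k \<in> gadget i" using ws(2) k by (auto intro: nth_mem)
    moreover have "ws ! k \<noteq> link i" using last n k nth_eq_iff_index_eq[of ws k "?n - 1"] by auto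
    ultimately show ?thesis by (auto simp: gadget_def)
  qed
  have "ws ! 0 \<in> neighbours edges (link i)" "ws ! (?n - 2) \<in> neighbours edges (link i)"
    using cycle_in_last_edges(1,2)[OF ws(1)] last by (auto simp: neighbours_def insert_commute)
  moreover have "ws ! 0 \<in> copy i ` V" "ws ! (?n - 2) \<in> copy i ` V" using copies n by auto
  ultimately show "{ws ! 0, ws ! (?n - 2)} = {copy i x, copy i y}"
    using cycle_in_last_edges(3)[OF ws(1)] neighbours_link[OF i] by auto
qed

lemma link_cycle_contract:
  assumes ws: "cycle_in verts edges ws" "set ws \<subseteq> gadget i" "ws ! (length ws - 1) = link i"
    and i: "i < g" and n: "4 \<le> length ws"
  shows "cycle_in V E (map uncopy (butlast ws))"
  unfolding cycle_in_def
proof (intro conjI allI impI)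
  let ?us = "map uncopy (butlast ws)" and ?n = "length ws"
  have copies: "set (butlast ws) \<subseteq> copy i ` V"
    using link_cycle_ends(1)[OF ws i] by (auto simp: in_set_conv_nth nth_butlast)
  show "3 \<le> length ?us" using n by simp
  have "inj_on uncopy (copy i ` V)" by (auto simp: inj_on_def)
  then show "distinct ?us" using ws(1) inj_on_subset[OF _ copies]
    by (simp add: cycle_in_def distinct_map distinct_butlast)
  show "set ?us \<subseteq> V" using copies by auto
  fix k assume k: "k < length ?us"
  show "{?us ! k, ?us ! ((k + 1) mod length ?us)} \<in> E"
  proof (cases "k = ?n - 2")
    case True
    then have "k + 1 = length ?us" using n by simp
    then have "(k + 1) mod length ?us = 0" by simp
    then have "{?us ! k, ?us ! ((k + 1) mod length ?us)} = uncopy ` {ws ! (?n - 2), ws ! 0}"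
      using True n by (simp add: nth_butlast)
    also have "\<dots> = {x, y}" using link_cycle_ends(2)[OF ws i] by (simp add: insert_commute)
    finally show ?thesis using base_edge by simp
  next
    case False
    then have "Suc k < ?n - 1" "(k + 1) mod length ?us = Suc k" using k by auto
    moreover have "{ws ! k, ws ! Suc k} \<in> edges" using cycle_in_edge[OF ws(1), of k] k by simp
    moreover obtain a b where "ws ! k = copy i a" "ws ! Suc k = copy i b"
      using link_cycle_ends(1)[OF ws i] calculation(1) by (meson Suc_lessD imageE)
    ultimately show ?thesis using copy_edgeD by (simp add: nth_butlast)
  qed
qed

lemma link_cycle_length:
  assumes cyc: "cycle_in verts edges vs" and sub: "set vs \<subseteq> gadget i" and i: "i < g"
    and link: "link i \<in> set vs"
  shows "g < length vs"
proof -
  obtain ws where ws: "cycle_in verts edges ws" "length ws = length vs" "set ws = set vs"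
    "ws ! (length ws - 1) = link i"
    using cycle_in_rotate_last[OF cyc link] .
  have ws': "cycle_in verts edges ws" "set ws \<subseteq> gadget i" "ws ! (length ws - 1) = link i"
    using ws sub by auto
  have "length ws \<noteq> 3"
  proof
    assume "length ws = 3"
    then have "{ws ! 0, ws ! 1} \<in> edges" "{ws ! 0, ws ! 1} = {copy i x, copy i y}"
      using cycle_in_edge[OF ws(1), of 0] link_cycle_ends(2)[OF ws' i] by simp_all
    then show False using copy_edgeD by auto
  qed
  then have "4 \<le> length ws" using cycle_in_length[OF ws(1)] by simp
  then have "g \<le> length ws - 1"
    using link_cycle_contract[OF ws' i] base_girth by (auto simp: girth_at_least_def)
  then show ?thesis using ws(2) g3 by simp
qed

lemma cycle_rim_or_gadget:
  assumes cyc: "cycle_in verts edges vs"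
  shows "set vs \<subseteq> rim ` {..<g} \<or> (\<exists>i<g. set vs \<subseteq> gadget i)"
proof (cases "\<exists>i<g. set vs \<inter> gadget i \<noteq> {}")
  case True
  then obtain i where "i < g" "set vs \<inter> gadget i \<noteq> {}" by blast
  then show ?thesis using cycle_in_bridge_side[OF cyc gadget_bridge] by blast
next
  case False
  have "set vs \<subseteq> verts" using cyc by (simp add: cycle_in_def)
  then show ?thesis using False by (auto simp: verts_def)
qed

lemma girth_at_least_verts_edges: "girth_at_least verts edges g"
  unfolding girth_at_least_def
proof (intro allI impI)
  fix vs assume cyc: "cycle_in verts edges vs"
  consider "set vs \<subseteq> rim ` {..<g}" | i where "i < g" "set vs \<subseteq> gadget i"
    using cycle_rim_or_gadget[OF cyc] by blast
  then show "g \<le> length vs"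
  proof cases
    case 1
    then show ?thesis by (rule rim_cycle_length[OF cyc])
  next
    case (2 i)
    show ?thesis
    proof (cases "link i \<in> set vs")
      case True
      then show ?thesis using link_cycle_length[OF cyc 2(2,1)] by simp
    next
      case False
      then have "set vs \<subseteq> copy i ` V" using 2 by (auto simp: gadget_def)
      then show ?thesis by (rule copy_cycle_length[OF cyc])
    qed
  qed
qed

lemma cycle_in_rim: "cycle_in verts edges (map rim [0..<g])"
  unfolding cycle_in_def
proof (intro conjI allI impI)
  show "3 \<le> length (map rim [0..<g])" using g3 by simp
  show "distinct (map rim [0..<g])" by (simp add: distinct_map inj_on_def)
  show "set (map rim [0..<g]) \<subseteq> verts" by (auto simp: rim_in_verts)
  fix i assume "i < length (map rim [0..<g])"
  then have i: "i < g" by simp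
  then have "arc (rim i) (rim (nxt i))" by (simp add: arc_rim_left)
  moreover have "(i + 1) mod g < g" using i by simp
  ultimately show "{map rim [0..<g] ! i, map rim [0..<g] ! ((i + 1) mod length (map rim [0..<g]))} \<in> edges"
    using i nxt_mod[OF i] by (simp add: edges_iff)
qed

lemma has_girth_verts_edges: "has_girth verts edges g"
  using has_girthI[OF cycle_in_rim] girth_at_least_verts_edges by simp

end

theorem mainTheorem8:
  fixes g :: nat
  assumes "g \<ge> 3"
  shows "(\<exists>(V :: nat set) E. graph V E \<and> fragile V E \<and> cubic V E \<and> has_girth V E g)
       \<and> (\<exists>(V :: nat set) E. graph V E \<and> fragile V E \<and> has_girth V E g \<and> \<not> two_degenerate V E)"
proof -
  obtain V :: "nat set" and E x y
    where "graph V E" "cubic V E" "connected V E" "girth_at_least V E g" "{x, y} \<in> E"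
    by (rule cubic_graph_large_girth_nat)
  then interpret fragile_construction g V E x y using assms by unfold_locales
  have "verts \<noteq> {}" using rim_in_verts[of 0] assms by auto
  then have "\<not> two_degenerate verts edges"
    by (rule cubic_not_two_degenerate[OF graph_verts_edges cubic_verts_edges])
  then show ?thesis
    using graph_verts_edges fragile_verts_edges cubic_verts_edges has_girth_verts_edges by blast
qed

end
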